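(* Let $N\ge2$ and $1\le q<2$. Then \[ \sup\left\{\mathcal F_{2,q}(\Omega):\ \Omega\subset\mathbb{R}^N\text{ simply connected open set}\right\}=+\infty, \qquad\text{where }\ \mathcal F_{2,q}(\Omega)=\lambda_{2,q}(\Omega)\left(\frac{|\Omega|^{\frac12+\frac1q}}{P(\Omega)}\right)^2. \]
   Context: $\lambda_{2,q}(\Omega):=\inf\{\int_\Omega|\nabla\psi|^2\,dx:\ \psi\in C_0^\infty(\Omega),\ \int_\Omega|\psi|^q\,dx=1\}$; $|\Omega|$ is Lebesgue measure and $P(\Omega)$ the De Giorgi perimeter. *)

theory Defs
  imports "HOL-Analysis.Analysis"
begin

definition Cinf :: "(real^'n \<Rightarrow> real) \<Rightarrow> bool" where
  "Cinf f \<longleftrightarrow> (\<exists>D. f \<in> D \<and> (\<forall>g\<in>D. g differentiable_on UNIV \<and>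
      (\<forall>i. (\<lambda>x. frechet_derivative g (at x) (axis i 1)) \<in> D)))"

definition tsupp :: "(real^'n \<Rightarrow> 'b::zero) \<Rightarrow> (real^'n) set" where
  "tsupp f = closure {x. f x \<noteq> 0}"

definition Cinf0 :: "(real^'n) set \<Rightarrow> (real^'n \<Rightarrow> real) \<Rightarrow> bool" where
  "Cinf0 \<Omega> \<psi> \<longleftrightarrow> Cinf \<psi> \<and> compact (tsupp \<psi>) \<and> tsupp \<psi> \<subseteq> \<Omega>"

definition grad_sq :: "(real^'n \<Rightarrow> real) \<Rightarrow> real^'n \<Rightarrow> real" where
  "grad_sq \<psi> x = (\<Sum>i\<in>UNIV. (frechet_derivative \<psi> (at x) (axis i 1))\<^sup>2)"

definition lambda2q :: "real \<Rightarrow> (real^'n) set \<Rightarrow> real" where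
  "lambda2q q \<Omega> = Inf {integral UNIV (grad_sq \<psi>) | \<psi>. Cinf0 \<Omega> \<psi> \<and>
      integral UNIV (\<lambda>x. \<bar>\<psi> x\<bar> powr q) = 1}"

definition divergence :: "(real^'n \<Rightarrow> real^'n) \<Rightarrow> real^'n \<Rightarrow> real" where
  "divergence \<phi> x = (\<Sum>i\<in>UNIV. frechet_derivative (\<lambda>y. \<phi> y $ i) (at x) (axis i 1))"

definition perimeter :: "(real^'n) set \<Rightarrow> ereal" where
  "perimeter \<Omega> = (SUP \<phi> \<in> {\<phi>. (\<forall>i. Cinf (\<lambda>x. \<phi> x $ i)) \<and> compact (tsupp \<phi>) \<and>
        (\<forall>x. norm (\<phi> x) \<le> 1)}. ereal (integral \<Omega> (divergence \<phi>)))"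

definition F2q :: "real \<Rightarrow> (real^'n) set \<Rightarrow> real" where
  "F2q q \<Omega> = lambda2q q \<Omega> *
     ((measure lebesgue \<Omega>) powr (1/2 + 1/q) / real_of_ereal (perimeter \<Omega>))\<^sup>2"

end

theory Submission
  imports Defs "HOL-Computational_Algebra.Polynomial"
begin

lemma power_div_fact_le_exp:
  fixes x :: real
  assumes "0 \<le> x"
  shows "x ^ k / fact k \<le> exp x"
proof -
  have "(\<Sum>n\<in>{k}. x ^ n /\<^sub>R fact n) \<le> (\<Sum>n. x ^ n /\<^sub>R fact n)"
    by (intro sum_le_suminf summable_exp_generic) (use assms in auto)
  thus ?thesis by (simp add: exp_def divide_simps)
qed

lemma exp_neg_inverse_le:
  fixes u :: real
  assumes "0 < u"
  shows "exp (-1/u) / u ^ n \<le> fact (n+2) * u\<^sup>2"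
proof -
  have "(1/u) ^ (n+2) / fact (n+2) \<le> exp (1/u)"
    by (rule power_div_fact_le_exp) (use assms in simp)
  hence "1 \<le> fact (n+2) * u^(n+2) * exp (1/u)"
    using assms by (simp add: divide_simps power_one_over mult_ac split: if_splits)
  hence "exp (-1/u) \<le> fact (n+2) * u^(n+2)"
    by (simp add: exp_minus field_simps)
  thus ?thesis using assms by (simp add: divide_simps power_add mult_ac power2_eq_square)
qed

definition bump_term :: "real poly \<Rightarrow> nat \<Rightarrow> real \<Rightarrow> real" where
  "bump_term p n t = (if \<bar>t\<bar> < 1 then poly p t * exp (-1/(1-t\<^sup>2)) / (1-t\<^sup>2)^n else 0)"

definition bump_term_deriv :: "real poly \<Rightarrow> nat \<Rightarrow> real poly" where
  "bump_term_deriv p n =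
     pderiv p * [:1,0,-1:]\<^sup>2 - smult 2 ([:0,1:] * p) + smult (2 * real n) ([:0,1:] * [:1,0,-1:] * p)"

lemma poly_bump_term_deriv:
  "poly (bump_term_deriv p n) t =
     poly (pderiv p) t * (1-t\<^sup>2)\<^sup>2 - 2*t*poly p t + 2*real n*t*(1-t\<^sup>2)*poly p t"
  by (simp add: bump_term_deriv_def algebra_simps power2_eq_square)

lemma bump_term_has_derivative_inside:
  assumes "\<bar>t\<bar> < 1"
  shows "(bump_term p n has_real_derivative bump_term (bump_term_deriv p n) (n+2) t) (at t)"
proof -
  define u where "u = 1 - t\<^sup>2"
  have u: "0 < u" using assms by (simp add: u_def abs_square_less_1)
  define E where "E = exp (-1/u)"
  have dE: "((\<lambda>t. exp (-1/(1-t\<^sup>2))) has_real_derivative E * (-2*t/u\<^sup>2)) (at t)"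
    using u by (auto intro!: derivative_eq_intros simp: E_def u_def power2_eq_square field_simps)
  have "((\<lambda>t. 1/(1-t\<^sup>2)) has_real_derivative 2*t/u\<^sup>2) (at t)"
    using u by (auto intro!: derivative_eq_intros simp: u_def power2_eq_square field_simps)
  from DERIV_power[OF this, of n]
  have "((\<lambda>t. (1/(1-t\<^sup>2))^n) has_real_derivative real n * (2*t/u\<^sup>2 * (1/u)^(n - Suc 0))) (at t)"
    by (simp add: u_def)
  moreover have "real n * (2*t/u\<^sup>2 * (1/u)^(n - Suc 0)) = 2*real n*t/u^(n+1)"
    using u by (cases n) (simp_all add: field_simps power2_eq_square)
  ultimately have dU: "((\<lambda>t. (1/(1-t\<^sup>2))^n) has_real_derivative 2*real n*t/u^(n+1)) (at t)"
    by simp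
  have "((\<lambda>t. poly p t * exp (-1/(1-t\<^sup>2)) * (1/(1-t\<^sup>2))^n) has_real_derivative
          (poly (pderiv p) t * E + E * (-2*t/u\<^sup>2) * poly p t) * (1/u)^n
          + 2*real n*t/u^(n+1) * (poly p t * E)) (at t)"
    using DERIV_mult[OF DERIV_mult[OF poly_DERIV[of p t] dE] dU] by (simp only: E_def u_def)
  moreover have "(poly (pderiv p) t * E + E * (-2*t/u\<^sup>2) * poly p t) * (1/u)^n
          + 2*real n*t/u^(n+1) * (poly p t * E) =
      (poly (pderiv p) t * u\<^sup>2 - 2*t*poly p t + 2*real n*t*u*poly p t) * E / u^(n+2)"
    using u by (simp add: power_one_over divide_simps power_add power2_eq_square) (simp add: algebra_simps)
  moreover have "bump_term (bump_term_deriv p n) (n+2) t =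
      (poly (pderiv p) t * u\<^sup>2 - 2*t*poly p t + 2*real n*t*u*poly p t) * E / u^(n+2)"
    using assms by (simp add: bump_term_def poly_bump_term_deriv E_def u_def)
  ultimately have "((\<lambda>t. poly p t * exp (-1/(1-t\<^sup>2)) * (1/(1-t\<^sup>2))^n) has_real_derivative
      bump_term (bump_term_deriv p n) (n+2) t) (at t)"
    by (simp only:)
  then show ?thesis
    by (rule has_field_derivative_transform_within_open[where S="{t. \<bar>t\<bar> < 1}"])
       (use assms in \<open>auto simp: bump_term_def power_one_over intro!: open_Collect_less continuous_intros\<close>)
qed


lemma bump_term_le_dist_sq:
  assumes "\<bar>t\<bar> = 1"
  obtains C where "\<And>s. \<bar>bump_term p n s\<bar> \<le> C * (s - t)\<^sup>2"
proof -
  have "compact (poly p ` {-1..1})"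
    by (intro compact_continuous_image continuous_intros) auto
  then obtain M where M: "0 < M" "\<And>s. \<bar>s\<bar> \<le> 1 \<Longrightarrow> \<bar>poly p s\<bar> \<le> M"
    by (auto simp: abs_le_iff dest!: compact_imp_bounded simp: bounded_pos)
  have "\<bar>bump_term p n s\<bar> \<le> (4 * M * fact (n+2)) * (s - t)\<^sup>2" for s
  proof (cases "\<bar>s\<bar> < 1")
    case True
    define u where "u = 1 - s\<^sup>2"
    have u: "0 < u" using True by (simp add: u_def abs_square_less_1)
    have "u = (1 - s) * (1 + s)" by (simp add: u_def algebra_simps power2_eq_square)
    also have "\<dots> \<le> 2 * \<bar>s - t\<bar>"
    proof (cases "t = 1")
      case True
      then show ?thesis using \<open>\<bar>s\<bar> < 1\<close> mult_left_mono[of "1 + s" 2 "1 - s"] by (auto simp: algebra_simps)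
    next
      case False
      hence "t = -1" using assms by auto
      then show ?thesis using \<open>\<bar>s\<bar> < 1\<close> mult_right_mono[of "1 - s" 2 "1 + s"] by (auto simp: algebra_simps)
    qed
    finally have "u \<le> 2 * \<bar>s - t\<bar>" .
    hence "u\<^sup>2 \<le> 4 * (s - t)\<^sup>2"
      using u power_mono[of u "2 * \<bar>s - t\<bar>" 2] by (simp add: power_mult_distrib)
    have "\<bar>bump_term p n s\<bar> = \<bar>poly p s\<bar> * (exp (-1/u) / u^n)"
      using True u by (simp add: bump_term_def u_def abs_mult)
    also have "\<dots> \<le> M * (fact (n+2) * u\<^sup>2)"
      using M(2)[of s] True exp_neg_inverse_le[OF u, of n] u by (intro mult_mono) auto
    also have "\<dots> \<le> M * (fact (n+2) * (4 * (s - t)\<^sup>2))"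
      using M(1) \<open>u\<^sup>2 \<le> 4 * (s - t)\<^sup>2\<close> by (intro mult_left_mono) auto
    also have "\<dots> = (4 * M * fact (n+2)) * (s - t)\<^sup>2"
      by (simp only: mult.assoc mult.left_commute)
    finally show ?thesis .
  next
    case False
    then show ?thesis using M(1) by (simp add: bump_term_def)
  qed
  then show ?thesis by (rule that)
qed

lemma bump_term_has_derivative_boundary:
  assumes "\<bar>t\<bar> = 1"
  shows "(bump_term p n has_real_derivative 0) (at t)"
proof -
  obtain C where C: "\<And>s. \<bar>bump_term p n s\<bar> \<le> C * (s - t)\<^sup>2"
    using bump_term_le_dist_sq[OF assms] by blast
  have "bump_term p n t = 0" using assms by (simp add: bump_term_def)
  hence "\<forall>s. norm ((bump_term p n s - bump_term p n t) / (s - t)) \<le> C * \<bar>s - t\<bar>"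
    using C by (auto simp: divide_simps power2_eq_square abs_mult mult.assoc)
  moreover have "((\<lambda>s. C * \<bar>s - t\<bar>) \<longlongrightarrow> 0) (at t)"
    by (auto intro!: tendsto_eq_intros)
  ultimately have "((\<lambda>s. (bump_term p n s - bump_term p n t) / (s - t)) \<longlongrightarrow> 0) (at t)"
    by (rule Lim_null_comparison[OF always_eventually])
  thus ?thesis by (simp add: has_field_derivative_iff)
qed

lemma bump_term_has_derivative:
  "(bump_term p n has_real_derivative bump_term (bump_term_deriv p n) (n+2) t) (at t)"
proof -
  consider "\<bar>t\<bar> < 1" | "\<bar>t\<bar> = 1" | "\<bar>t\<bar> > 1" by linarith
  thus ?thesis
  proof cases
    case 1
    then show ?thesis by (rule bump_term_has_derivative_inside)
  next
    case 2
    then show ?thesis using bump_term_has_derivative_boundary[OF 2] by (simp add: bump_term_def)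
  next
    case 3
    have "((\<lambda>_. 0) has_real_derivative 0) (at t)" by simp
    hence "(bump_term p n has_real_derivative 0) (at t)"
      by (rule has_field_derivative_transform_within_open[where S="{t. \<bar>t\<bar> > 1}"])
         (use 3 in \<open>auto simp: bump_term_def intro!: open_Collect_less continuous_intros\<close>)
    thus ?thesis using 3 by (simp add: bump_term_def)
  qed
qed

definition bump_family :: "(real \<Rightarrow> real) set" where
  "bump_family = {h. \<exists>a b c p n. h = (\<lambda>t. a * bump_term p n (b*t + c))}"

lemma bump_family_has_derivative:
  assumes "h \<in> bump_family"
  obtains h' where "h' \<in> bump_family" "\<And>t. (h has_real_derivative h' t) (at t)"
proof -
  obtain a b c p n where h: "h = (\<lambda>t. a * bump_term p n (b*t + c))"
    using assms by (auto simp: bump_family_def)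
  define h' where "h' = (\<lambda>t. (a*b) * bump_term (bump_term_deriv p n) (n+2) (b*t + c))"
  have "h' \<in> bump_family" unfolding bump_family_def h'_def by blast
  moreover have "(h has_real_derivative h' t) (at t)" for t
    unfolding h h'_def
    by (rule derivative_eq_intros DERIV_chain2[OF bump_term_has_derivative] refl | simp)+
  ultimately show ?thesis by (rule that)
qed

lemma has_derivative_prod_coordinates:
  fixes h h' :: "'n::finite \<Rightarrow> real \<Rightarrow> real"
  assumes "\<And>i t. (h i has_real_derivative h' i t) (at t)"
  shows "((\<lambda>x::real^'n. \<Prod>i\<in>UNIV. h i (x$i)) has_derivative
           (\<lambda>y. \<Sum>k\<in>UNIV. h' k (x$k) * (\<Prod>j\<in>UNIV - {k}. h j (x$j)) * y$k)) (at x)"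
proof -
  have "((\<lambda>x::real^'n. h i (x$i)) has_derivative (\<lambda>y. h' i (x$i) * y$i)) (at x)" for i
    using has_derivative_compose[OF bounded_linear_imp_has_derivative[OF bounded_linear_vec_nth[of i]]
        assms[of i "x$i", unfolded has_field_derivative_def]] by (simp add: mult.commute)
  from has_derivative_prod[OF this] show ?thesis by (simp add: mult_ac)
qed

lemma partial_derivative_prod_coordinates:
  fixes h h' :: "'n::finite \<Rightarrow> real \<Rightarrow> real"
  assumes "\<And>i t. (h i has_real_derivative h' i t) (at t)"
  shows "frechet_derivative (\<lambda>x::real^'n. \<Prod>i\<in>UNIV. h i (x$i)) (at x) (axis k 1)
           = h' k (x$k) * (\<Prod>j\<in>UNIV - {k}. h j (x$j))"
proof -
  have "frechet_derivative (\<lambda>x::real^'n. \<Prod>i\<in>UNIV. h i (x$i)) (at x) =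
          (\<lambda>y. \<Sum>i\<in>UNIV. h' i (x$i) * (\<Prod>j\<in>UNIV - {i}. h j (x$j)) * y$i)"
    by (rule frechet_derivative_at[OF has_derivative_prod_coordinates[OF assms], symmetric])
  thus ?thesis by (simp add: axis_def if_distrib cong: if_cong)
qed

definition tensor_bumps :: "(real^'n \<Rightarrow> real) set" where
  "tensor_bumps = {G. \<exists>h. (\<forall>i. h i \<in> bump_family) \<and> G = (\<lambda>x. \<Prod>i\<in>UNIV. h i (x$i))}"

lemma tensor_bumps_partial:
  assumes "G \<in> tensor_bumps"
  shows "G differentiable at x" and "(\<lambda>x. frechet_derivative G (at x) (axis k 1)) \<in> tensor_bumps"
proof -
  obtain h where h: "\<And>i. h i \<in> bump_family" and G: "G = (\<lambda>x. \<Prod>i\<in>UNIV. h i (x$i))"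
    using assms by (auto simp: tensor_bumps_def)
  have "\<forall>i. \<exists>h'. h' \<in> bump_family \<and> (\<forall>t. (h i has_real_derivative h' t) (at t))"
    using bump_family_has_derivative[OF h] by blast
  then obtain h' where h': "\<And>i. h' i \<in> bump_family" "\<And>i t. (h i has_real_derivative h' i t) (at t)"
    by metis
  show "G differentiable at x"
    unfolding G differentiable_def by (rule exI has_derivative_prod_coordinates h')+
  have "frechet_derivative G (at x) (axis k 1) = (\<Prod>i\<in>UNIV. (h(k := h' k)) i (x$i))" for x
    unfolding G partial_derivative_prod_coordinates[OF h'(2)]
    by (subst prod.remove[of UNIV k]) (auto simp: mult_ac intro!: prod.cong)
  moreover have "(\<lambda>x. \<Prod>i\<in>UNIV. (h(k := h' k)) i (x$i)) \<in> tensor_bumps"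
    unfolding tensor_bumps_def using h h' by (auto intro!: exI[of _ "h(k := h' k)"])
  ultimately show "(\<lambda>x. frechet_derivative G (at x) (axis k 1)) \<in> tensor_bumps"
    by simp
qed

lemma Cinf_tensor_bumps: "G \<in> tensor_bumps \<Longrightarrow> Cinf G"
  unfolding Cinf_def
  by (intro exI[of _ tensor_bumps])
     (auto simp: tensor_bumps_partial differentiable_on_def intro: differentiable_at_withinI)


lemma Cinf_differentiable: "Cinf f \<Longrightarrow> f differentiable at x"
  unfolding Cinf_def differentiable_on_def by auto

lemma Cinf_partial: "Cinf f \<Longrightarrow> Cinf (\<lambda>x. frechet_derivative f (at x) (axis k 1))"
  unfolding Cinf_def by blast

lemma Cinf_continuous_on: "Cinf f \<Longrightarrow> continuous_on S f"
  by (meson Cinf_differentiable continuous_at_imp_continuous_on differentiable_imp_continuous_within)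

lemma partial_derivative_cmult:
  fixes f :: "'a::real_normed_vector \<Rightarrow> real"
  assumes "f differentiable at x"
  shows "frechet_derivative (\<lambda>y. a * f y) (at x) v = a * frechet_derivative f (at x) v"
proof -
  have "((\<lambda>y. a * f y) has_derivative (\<lambda>v. a * frechet_derivative f (at x) v)) (at x)"
    using assms by (intro has_derivative_mult_right) (simp add: frechet_derivative_works)
  thus ?thesis by (simp add: frechet_derivative_at[symmetric])
qed

lemma Cinf_cmult:
  assumes "Cinf f"
  shows "Cinf (\<lambda>x. a * f x)"
proof -
  obtain D where D: "f \<in> D" "\<And>g. g \<in> D \<Longrightarrow> g differentiable_on UNIV"
      "\<And>g i. g \<in> D \<Longrightarrow> (\<lambda>x. frechet_derivative g (at x) (axis i 1)) \<in> D"
    using assms unfolding Cinf_def by blast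
  have "(\<lambda>g x. a * g x) ` D \<subseteq> {g. g differentiable_on UNIV \<and>
          (\<forall>i. (\<lambda>x. frechet_derivative g (at x) (axis i 1)) \<in> (\<lambda>g x. a * g x) ` D)}"
  proof safe
    fix g assume "g \<in> D"
    show "(\<lambda>x. a * g x) differentiable_on UNIV"
      using D(2)[OF \<open>g \<in> D\<close>] by (simp add: differentiable_on_def)
    fix i
    have "(\<lambda>x. frechet_derivative (\<lambda>y. a * g y) (at x) (axis i 1))
            = (\<lambda>x. a * frechet_derivative g (at x) (axis i 1))"
      using D(2)[OF \<open>g \<in> D\<close>]
      by (intro ext partial_derivative_cmult) (simp add: differentiable_on_def)
    thus "(\<lambda>x. frechet_derivative (\<lambda>y. a * g y) (at x) (axis i 1)) \<in> (\<lambda>g x. a * g x) ` D"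
      using D(3)[OF \<open>g \<in> D\<close>] by simp
  qed
  thus ?thesis
    unfolding Cinf_def using D(1) by (intro exI[of _ "(\<lambda>g x. a * g x) ` D"]) auto
qed

lemma Cinf_has_derivative_line:
  assumes "Cinf f"
  shows "((\<lambda>s. f (x + s *\<^sub>R e)) has_real_derivative frechet_derivative f (at (x + s *\<^sub>R e)) e) (at s)"
proof -
  have f: "(f has_derivative frechet_derivative f (at (x + s *\<^sub>R e))) (at (x + s *\<^sub>R e))"
    using Cinf_differentiable[OF assms] frechet_derivative_works by blast
  have "((\<lambda>s. x + s *\<^sub>R e) has_derivative (\<lambda>t. t *\<^sub>R e)) (at s)"
    by (auto intro!: derivative_eq_intros)
  from has_derivative_compose[OF this f]
  have "((\<lambda>s. f (x + s *\<^sub>R e)) has_derivative (\<lambda>t. frechet_derivative f (at (x + s *\<^sub>R e)) (t *\<^sub>R e))) (at s)" .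
  moreover have "linear (frechet_derivative f (at (x + s *\<^sub>R e)))"
    using f has_derivative_linear by blast
  ultimately have "((\<lambda>s. f (x + s *\<^sub>R e)) has_derivative
      (\<lambda>t. t * frechet_derivative f (at (x + s *\<^sub>R e)) e)) (at s)"
    by (simp add: linear_scale)
  thus ?thesis by (simp add: has_field_derivative_def mult_commute_abs)
qed

lemma not_in_tsupp_imp_zero: "x \<notin> tsupp f \<Longrightarrow> f x = 0"
  unfolding tsupp_def using closure_subset[of "{x. f x \<noteq> 0}"] by auto

lemma partial_derivative_outside_tsupp:
  fixes f :: "real^'n \<Rightarrow> real"
  assumes "Cinf f" "x \<notin> tsupp f"
  shows "frechet_derivative f (at x) v = 0"
proof -
  have "frechet_derivative f (at x) = frechet_derivative (\<lambda>_. 0) (at x)"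
    using assms not_in_tsupp_imp_zero
    by (intro frechet_derivative_transform_within_open[OF Cinf_differentiable[OF assms(1)], of "- tsupp f"])
       (auto simp: tsupp_def)
  thus ?thesis by (simp add: frechet_derivative_const)
qed

lemma compact_tsupp_subset:
  fixes f :: "real^'n \<Rightarrow> 'a::real_normed_vector" and g :: "real^'n \<Rightarrow> 'b::real_normed_vector"
  assumes "compact (tsupp g)" "\<And>x. f x \<noteq> 0 \<Longrightarrow> g x \<noteq> 0"
  shows "compact (tsupp f)"
proof -
  have "tsupp f \<subseteq> tsupp g" unfolding tsupp_def by (rule closure_mono) (use assms(2) in auto)
  thus ?thesis
    using compact_Int_closed[OF assms(1), of "tsupp f"] by (simp add: tsupp_def Int_absorb1)
qed

definition cube_bump :: "real^'n \<Rightarrow> real \<Rightarrow> real^'n \<Rightarrow> real" where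
  "cube_bump c r x = (\<Prod>i\<in>UNIV. bump_term [:1:] 0 ((x$i - c$i) / r))"

lemma bump_term_one: "bump_term [:1:] 0 t = (if \<bar>t\<bar> < 1 then exp (-1/(1-t\<^sup>2)) else 0)"
  by (simp add: bump_term_def)

lemma bump_term_one_deriv_pos:
  assumes "-1 < t" "t < 0"
  shows "0 < bump_term (bump_term_deriv [:1:] 0) 2 t"
proof -
  have "t\<^sup>2 < 1" using assms by (simp add: abs_square_less_1)
  hence "0 < (1 - t\<^sup>2)\<^sup>2" by simp
  moreover have "2 * t * exp (-1/(1-t\<^sup>2)) < 0" using assms by (simp add: mult_neg_pos)
  ultimately show ?thesis
    using assms \<open>t\<^sup>2 < 1\<close> by (simp add: bump_term_def poly_bump_term_deriv divide_neg_pos)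
qed

lemma cube_bump_has_partial_derivative:
  assumes "0 < r"
  shows "frechet_derivative (cube_bump c r) (at x) (axis k 1) =
     bump_term (bump_term_deriv [:1:] 0) 2 ((x$k - c$k) / r) / r *
     (\<Prod>j\<in>UNIV - {k}. bump_term [:1:] 0 ((x$j - c$j) / r))"
proof -
  have "((\<lambda>t. bump_term [:1:] 0 ((t - c$i) / r)) has_real_derivative
          bump_term (bump_term_deriv [:1:] 0) 2 ((t - c$i) / r) / r) (at t)" for i t
  proof -
    have "((\<lambda>t. (t - c$i) / r) has_real_derivative 1/r) (at t)"
      using assms by (auto intro!: derivative_eq_intros)
    from DERIV_chain2[OF bump_term_has_derivative[of "[:1:]" 0] this] show ?thesis
      by (simp add: numeral_2_eq_2)
  qed
  from partial_derivative_prod_coordinates[OF this] show ?thesis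
    using assms by (simp add: cube_bump_def[abs_def])
qed

lemma cube_bump_in_tensor_bumps: "cube_bump c r \<in> tensor_bumps"
proof -
  have "(\<lambda>t. bump_term [:1:] 0 ((t - c$i) / r)) \<in> bump_family" for i
  proof -
    have "(\<lambda>t. bump_term [:1:] 0 ((t - c$i) / r)) = (\<lambda>t. 1 * bump_term [:1:] 0 ((1/r) * t + - c$i / r))"
      by (simp add: diff_divide_distrib)
    thus ?thesis unfolding bump_family_def by blast
  qed
  thus ?thesis
    unfolding tensor_bumps_def cube_bump_def[abs_def]
    by (intro CollectI exI[of _ "\<lambda>i t. bump_term [:1:] 0 ((t - c$i) / r)"]) auto
qed

lemma Cinf_cube_bump: "Cinf (\<lambda>x. a * cube_bump c r x)"
  by (intro Cinf_cmult Cinf_tensor_bumps cube_bump_in_tensor_bumps)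

lemma cube_bump_nonneg: "0 \<le> cube_bump c r x"
  by (simp add: cube_bump_def bump_term_one prod_nonneg)

lemma cube_bump_le_one: "cube_bump c r x \<le> 1"
proof -
  have "0 \<le> bump_term [:1:] 0 t \<and> bump_term [:1:] 0 t \<le> 1" for t
    by (simp add: bump_term_one divide_nonneg_pos abs_square_le_1)
  thus ?thesis unfolding cube_bump_def by (intro prod_le_1) auto
qed

lemma cube_bump_pos:
  assumes "0 < r" "\<And>i. \<bar>x$i - c$i\<bar> < r"
  shows "0 < cube_bump c r x"
  using assms by (auto simp: cube_bump_def bump_term_one abs_divide intro!: prod_pos)

lemma cube_bump_nonzero_imp:
  assumes "0 < r" "cube_bump c r x \<noteq> 0"
  shows "\<bar>x$i - c$i\<bar> < r"
  using assms by (auto simp: cube_bump_def bump_term_one abs_divide split: if_splits)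

lemma tsupp_cube_bump:
  assumes "0 < r"
  shows "tsupp (cube_bump c r) \<subseteq> cbox (\<chi> i. c$i - r) (\<chi> i. c$i + r)"
  unfolding tsupp_def
proof (rule closure_minimal)
  show "{x. cube_bump c r x \<noteq> 0} \<subseteq> cbox (\<chi> i. c$i - r) (\<chi> i. c$i + r)"
  proof
    fix x assume "x \<in> {x. cube_bump c r x \<noteq> 0}"
    hence "\<bar>x$i - c$i\<bar> < r" for i using cube_bump_nonzero_imp[OF assms] by blast
    hence "c$i - r \<le> x$i \<and> x$i \<le> c$i + r" for i by (smt (verit))
    thus "x \<in> cbox (\<chi> i. c$i - r) (\<chi> i. c$i + r)" by (simp add: mem_box_cart)
  qed
qed (rule closed_cbox)

lemma compact_tsupp_cube_bump:
  assumes "0 < r"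
  shows "compact (tsupp (cube_bump c r))"
proof -
  have "compact (cbox (\<chi> i. c$i - r) (\<chi> i. c$i + r) \<inter> tsupp (cube_bump c r))"
    by (rule compact_Int_closed) (simp_all add: tsupp_def)
  with tsupp_cube_bump[OF assms, of c] show ?thesis by (simp add: Int_absorb1)
qed


lemma integrable_compact_support:
  fixes g :: "'a::euclidean_space \<Rightarrow> real"
  assumes "continuous_on UNIV g" "compact K" "\<And>x. x \<notin> K \<Longrightarrow> g x = 0"
  shows "g integrable_on UNIV"
proof -
  obtain a where a: "K \<subseteq> cbox (-a) a"
    using bounded_subset_cbox_symmetric compact_imp_bounded[OF assms(2)] by metis
  have "g integrable_on cbox (-a) a"
    by (rule integrable_continuous) (rule continuous_on_subset[OF assms(1)], auto)
  thus ?thesis by (rule integrable_on_superset) (use a assms(3) in auto)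
qed

lemma integral_pos_continuous:
  fixes f :: "'a::euclidean_space \<Rightarrow> real"
  assumes f: "continuous_on S f" "f integrable_on S" "\<And>x. x \<in> S \<Longrightarrow> 0 \<le> f x"
    and S: "open S" "p \<in> S" "0 < f p"
  shows "0 < integral S f"
proof -
  have "open (S \<inter> f -` {f p / 2<..})"
    by (rule continuous_open_preimage[OF f(1) S(1)]) simp
  then obtain a b where ab: "cbox a b \<subseteq> S \<inter> f -` {f p / 2<..}" "\<forall>i\<in>Basis. a \<bullet> i < b \<bullet> i"
    by (rule open_contains_cbox) (use S in auto)
  have int_ab: "f integrable_on cbox a b"
    using ab(1) by (intro integrable_continuous continuous_on_subset[OF f(1)]) auto
  have "0 < measure lborel (cbox a b) * (f p / 2)"
    using content_pos_lt[OF ab(2)] S(3) by simp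
  also have "\<dots> = integral (cbox a b) (\<lambda>_. f p / 2)" by simp
  also have "\<dots> \<le> integral (cbox a b) f"
    using ab(1) by (intro integral_le int_ab) auto
  also have "\<dots> \<le> integral S f"
    using ab(1) by (intro integral_subset_le int_ab f(2)) (auto intro: f(3))
  finally show ?thesis .
qed

lemma nn_integral_segment_translates:
  fixes f :: "'a::euclidean_space \<Rightarrow> ennreal"
  assumes [measurable]: "f \<in> borel_measurable borel" and "a \<le> b"
  shows "(\<integral>\<^sup>+x. (\<integral>\<^sup>+s. f (x + s *\<^sub>R e) * indicator {a..b} s \<partial>lborel) \<partial>lborel)
         = ennreal (b - a) * (\<integral>\<^sup>+x. f x \<partial>lborel)"
proof -
  have translate: "(\<integral>\<^sup>+x. f (x + v) \<partial>lborel) = (\<integral>\<^sup>+x. f x \<partial>lborel)" for v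
  proof -
    have "(\<integral>\<^sup>+x. f x \<partial>lborel) = (\<integral>\<^sup>+x. f x \<partial>(distr lborel borel ((+) v)))"
      by (simp add: lborel_distr_plus)
    also have "\<dots> = (\<integral>\<^sup>+x. f (v + x) \<partial>lborel)"
      by (rule nn_integral_distr) auto
    finally show ?thesis by (simp add: add.commute)
  qed
  have "(\<integral>\<^sup>+x. (\<integral>\<^sup>+s. f (x + s *\<^sub>R e) * indicator {a..b} s \<partial>lborel) \<partial>lborel)
      = (\<integral>\<^sup>+s. (\<integral>\<^sup>+x. f (x + s *\<^sub>R e) * indicator {a..b} s \<partial>lborel) \<partial>lborel)"
    by (rule lborel_pair.Fubini') measurable
  also have "\<dots> = (\<integral>\<^sup>+s. (\<integral>\<^sup>+x. f x \<partial>lborel) * indicator {a..b} s \<partial>lborel)"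
    by (intro nn_integral_cong) (simp add: nn_integral_multc translate)
  also have "\<dots> = ennreal (b - a) * (\<integral>\<^sup>+x. f x \<partial>lborel)"
    using assms(2) by (simp add: nn_integral_cmult_indicator mult.commute)
  finally show ?thesis .
qed


lemma has_integral_segment_translates_nonneg:
  fixes g :: "'a::euclidean_space \<Rightarrow> real"
  assumes g: "continuous_on UNIV g" "g integrable_on UNIV" "\<And>x. 0 \<le> g x" and "a \<le> b"
  shows "((\<lambda>x. integral {a..b} (\<lambda>s. g (x + s *\<^sub>R e))) has_integral (b - a) * integral UNIV g) UNIV"
proof -
  have [measurable]: "g \<in> borel_measurable borel"
    using g(1) by (rule borel_measurable_continuous_onI)
  have G_nonneg: "0 \<le> integral UNIV g"
    by (rule integral_nonneg[OF g(2)]) (use g(3) in auto)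
  define I where "I x = integral {a..b} (\<lambda>s. g (x + s *\<^sub>R e))" for x
  have I_nonneg: "0 \<le> I x" for x
    unfolding I_def by (rule integral_nonneg) (auto intro!: integrable_continuous_interval
        continuous_on_compose2[OF g(1)] continuous_intros g(3))
  have I_nn: "ennreal (I x) = (\<integral>\<^sup>+s. ennreal (g (x + s *\<^sub>R e)) * indicator {a..b} s \<partial>lborel)" for x
    unfolding I_def
    by (rule nn_integral_has_integral_lebesgue'[symmetric])
       (auto intro!: g(3) integrable_integral integrable_continuous_interval
         continuous_on_compose2[OF g(1)] continuous_intros)
  have "(\<lambda>x. enn2real (\<integral>\<^sup>+s. ennreal (g (x + s *\<^sub>R e)) * indicator {a..b} s \<partial>lborel))
          \<in> borel_measurable borel"
    by measurable
  moreover have "I = (\<lambda>x. enn2real (\<integral>\<^sup>+s. ennreal (g (x + s *\<^sub>R e)) * indicator {a..b} s \<partial>lborel))"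
    using I_nn I_nonneg by (auto simp: fun_eq_iff simp flip: I_nn)
  ultimately have I_meas: "I \<in> borel_measurable borel" by simp
  have "(\<integral>\<^sup>+x. ennreal (I x) \<partial>lborel) = ennreal (b - a) * (\<integral>\<^sup>+x. ennreal (g x) \<partial>lborel)"
    unfolding I_nn by (rule nn_integral_segment_translates[OF _ assms(4)]) measurable
  also have "(\<integral>\<^sup>+x. ennreal (g x) \<partial>lborel) = ennreal (integral UNIV g)"
    using nn_integral_has_integral_lebesgue'[of UNIV g, OF _ integrable_integral[OF g(2)]] g(3)
    by simp
  finally have "(\<integral>\<^sup>+x. ennreal (I x) \<partial>lborel) = ennreal ((b - a) * integral UNIV g)"
    using assms(4) G_nonneg by (simp add: ennreal_mult)
  thus ?thesis
    unfolding I_def[symmetric]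
    by (intro nn_integral_has_integral I_meas I_nonneg) (use assms(4) G_nonneg in auto)
qed

lemma integrable_segment_translates:
  fixes F :: "'a::euclidean_space \<Rightarrow> real"
  assumes F: "integrable lborel F" and "a \<le> b"
  shows "integrable lborel (\<lambda>x. \<integral>s. F (x + s *\<^sub>R e) * indicator {a..b} s \<partial>lborel)"
    and "(\<integral>x. (\<integral>s. F (x + s *\<^sub>R e) * indicator {a..b} s \<partial>lborel) \<partial>lborel) = (b - a) * (\<integral>x. F x \<partial>lborel)"
proof -
  have [measurable]: "F \<in> borel_measurable borel"
    using F borel_measurable_integrable measurable_lborel1 by (metis measurable_cong_sets sets_lborel)
  define H where "H x s = F (x + s *\<^sub>R e) * indicator {a..b} s" for x s
  have H_meas: "(\<lambda>(x, s). H x s) \<in> borel_measurable (lborel \<Otimes>\<^sub>M lborel)"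
    unfolding H_def by measurable
  have "(\<integral>\<^sup>+p. ennreal (norm ((\<lambda>(x, s). H x s) p)) \<partial>(lborel \<Otimes>\<^sub>M lborel))
      = (\<integral>\<^sup>+x. (\<integral>\<^sup>+s. ennreal (norm (H x s)) \<partial>lborel) \<partial>lborel)"
    by (subst lborel.nn_integral_fst[symmetric]) (use H_meas in auto)
  also have "\<dots> = (\<integral>\<^sup>+x. (\<integral>\<^sup>+s. ennreal \<bar>F (x + s *\<^sub>R e)\<bar> * indicator {a..b} s \<partial>lborel) \<partial>lborel)"
    by (intro nn_integral_cong) (auto simp: H_def indicator_def abs_mult)
  also have "\<dots> = ennreal (b - a) * (\<integral>\<^sup>+x. ennreal \<bar>F x\<bar> \<partial>lborel)"
    by (rule nn_integral_segment_translates[OF _ assms(2)]) measurable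
  also have "\<dots> < \<infinity>"
    using F unfolding integrable_iff_bounded by (simp add: ennreal_mult_less_top)
  finally have H_int: "integrable (lborel \<Otimes>\<^sub>M lborel) (\<lambda>(x, s). H x s)"
    using H_meas by (simp add: integrable_iff_bounded)
  show "integrable lborel (\<lambda>x. \<integral>s. F (x + s *\<^sub>R e) * indicator {a..b} s \<partial>lborel)"
    using lborel_pair.integrable_fst[OF H_int] by (simp add: H_def)
  have translate: "(\<integral>x. F (x + v) \<partial>lborel) = (\<integral>x. F x \<partial>lborel)" for v
  proof -
    have "(\<integral>x. F x \<partial>lborel) = (\<integral>x. F x \<partial>(distr lborel borel ((+) v)))"
      by (simp add: lborel_distr_plus)
    also have "\<dots> = (\<integral>x. F (v + x) \<partial>lborel)"
      by (rule integral_distr) auto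
    finally show ?thesis by (simp add: add.commute)
  qed
  have "(\<integral>x. (\<integral>s. H x s \<partial>lborel) \<partial>lborel) = (\<integral>s. (\<integral>x. H x s \<partial>lborel) \<partial>lborel)"
    using lborel_pair.Fubini_integral[OF H_int] by simp
  also have "\<dots> = (\<integral>s. (\<integral>x. F x \<partial>lborel) * indicator {a..b} s \<partial>lborel)"
    by (intro Bochner_Integration.integral_cong refl) (simp add: H_def translate)
  also have "\<dots> = (b - a) * (\<integral>x. F x \<partial>lborel)"
    using assms(2) by (simp add: integral_indicator mult.commute)
  finally show "(\<integral>x. (\<integral>s. F (x + s *\<^sub>R e) * indicator {a..b} s \<partial>lborel) \<partial>lborel) = (b - a) * (\<integral>x. F x \<partial>lborel)"
    by (simp add: H_def)
qed


lemma square_integral_le: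
  fixes g :: "real \<Rightarrow> real"
  assumes "a \<le> b" "continuous_on {a..b} g"
  shows "(integral {a..b} g)\<^sup>2 \<le> (b - a) * integral {a..b} (\<lambda>s. (g s)\<^sup>2)"
proof (cases "a = b")
  case False
  define L where "L = b - a"
  have L: "0 < L" using assms(1) False by (simp add: L_def)
  define I where "I = integral {a..b} g"
  define J where "J = integral {a..b} (\<lambda>s. (g s)\<^sup>2)"
  define m where "m = I / L"
  have "((\<lambda>s. (g s)\<^sup>2 - (2*m) * g s + m\<^sup>2) has_integral J - (2*m) * I + L * m\<^sup>2) {a..b}"
    using has_integral_const_real[of "m\<^sup>2" a b] assms unfolding I_def J_def L_def
    by (intro has_integral_add has_integral_diff has_integral_mult_right integrable_integral
        integrable_continuous_interval continuous_intros) auto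
  moreover have "0 \<le> integral {a..b} (\<lambda>s. (g s - m)\<^sup>2)"
    by (rule integral_nonneg) (auto intro!: integrable_continuous_interval continuous_intros assms(2))
  ultimately have "0 \<le> J - (2*m) * I + L * m\<^sup>2"
    by (simp add: integral_unique power2_eq_square algebra_simps)
  also have "\<dots> = J - I\<^sup>2 / L"
    using L by (simp add: m_def field_simps power2_eq_square)
  finally show ?thesis using L by (simp add: I_def J_def L_def divide_simps mult_ac)
qed simp

lemma square_le_line_energy:
  fixes f :: "real^'n \<Rightarrow> real"
  assumes f: "Cinf f" and zero: "f (x + s0 *\<^sub>R axis k 1) = 0" and s0: "\<bar>s0\<bar> \<le> h"
  shows "(f x)\<^sup>2 \<le> h * integral {-h..h} (\<lambda>s. (frechet_derivative f (at (x + s *\<^sub>R axis k 1)) (axis k 1))\<^sup>2)"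
proof -
  define e :: "real^'n" where "e = axis k 1"
  define F' where "F' s = frechet_derivative f (at (x + s *\<^sub>R e)) e" for s
  have cF': "continuous_on UNIV F'"
    unfolding F'_def e_def
    by (intro continuous_on_compose2[OF Cinf_continuous_on[OF Cinf_partial[OF f]]] continuous_intros) auto
  define a where "a = min 0 s0"
  define b where "b = max 0 s0"
  have ab: "a \<le> b" by (simp add: a_def b_def)
  have "(F' has_integral f (x + b *\<^sub>R e) - f (x + a *\<^sub>R e)) {a..b}"
    unfolding F'_def
    by (rule fundamental_theorem_of_calculus[OF ab])
       (auto simp: has_real_derivative_iff_has_vector_derivative[symmetric]
         intro: DERIV_subset Cinf_has_derivative_line[OF f])
  moreover have "\<bar>f (x + b *\<^sub>R e) - f (x + a *\<^sub>R e)\<bar> = \<bar>f x\<bar>"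
    using zero by (cases "s0 \<ge> 0") (auto simp: a_def b_def e_def)
  ultimately have "(f x)\<^sup>2 = (integral {a..b} F')\<^sup>2"
    by (metis integral_unique power2_abs)
  also have "\<dots> \<le> (b - a) * integral {a..b} (\<lambda>s. (F' s)\<^sup>2)"
    by (rule square_integral_le[OF ab continuous_on_subset[OF cF']]) simp
  also have "\<dots> \<le> h * integral {-h..h} (\<lambda>s. (F' s)\<^sup>2)"
  proof (rule mult_mono)
    show "integral {a..b} (\<lambda>s. (F' s)\<^sup>2) \<le> integral {-h..h} (\<lambda>s. (F' s)\<^sup>2)"
      using s0 by (intro integral_subset_le integrable_continuous_interval continuous_intros
          continuous_on_subset[OF cF']) (auto simp: a_def b_def)
    show "0 \<le> integral {a..b} (\<lambda>s. (F' s)\<^sup>2)"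
      by (intro integral_nonneg integrable_continuous_interval continuous_intros
          continuous_on_subset[OF cF']) auto
  qed (use s0 in \<open>auto simp: a_def b_def\<close>)
  finally show ?thesis by (simp add: F'_def e_def)
qed

lemma poincare_two_directions:
  fixes \<psi> :: "real^'n \<Rightarrow> real"
  assumes \<psi>: "Cinf \<psi>" "compact (tsupp \<psi>)" and "i1 \<noteq> i2" "0 < h"
    and zero_nearby: "\<And>x. (\<exists>s. \<bar>s\<bar> \<le> h \<and> \<psi> (x + s *\<^sub>R axis i1 1) = 0) \<or>
                          (\<exists>s. \<bar>s\<bar> \<le> h \<and> \<psi> (x + s *\<^sub>R axis i2 1) = 0)"
  shows "integral UNIV (\<lambda>x. (\<psi> x)\<^sup>2) \<le> 2*h\<^sup>2 * integral UNIV (grad_sq \<psi>)"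
proof -
  define g where "g k y = (frechet_derivative \<psi> (at y) (axis k 1))\<^sup>2" for k y
  have g_cont: "continuous_on UNIV (g k)" for k
    unfolding g_def by (intro continuous_intros Cinf_continuous_on Cinf_partial \<psi>(1))
  have g_int: "g k integrable_on UNIV" for k
    by (rule integrable_compact_support[OF g_cont \<psi>(2)])
       (simp add: g_def partial_derivative_outside_tsupp[OF \<psi>(1)])
  define G where "G k = integral UNIV (g k)" for k
  have G_nonneg: "0 \<le> G k" for k
    unfolding G_def using g_int by (rule integral_nonneg) (simp add: g_def)
  define I where "I k x = integral {-h..h} (\<lambda>s. g k (x + s *\<^sub>R axis k 1))" for k x
  have I_int: "(I k has_integral 2*h * G k) UNIV" for k
    using has_integral_segment_translates_nonneg[OF g_cont[of k] g_int[of k], where a="-h" and b=h and e="axis k 1"] \<open>0 < h\<close>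
    by (simp add: I_def[abs_def] G_def g_def)
  have I_nonneg: "0 \<le> I k x" for k x
    unfolding I_def g_def
    by (intro integral_nonneg integrable_continuous_interval continuous_on_compose2[OF g_cont[unfolded g_def]]
        continuous_intros) auto
  have pointwise: "(\<psi> x)\<^sup>2 \<le> h * I i1 x + h * I i2 x" for x
  proof -
    have "(\<psi> x)\<^sup>2 \<le> h * I i1 x \<or> (\<psi> x)\<^sup>2 \<le> h * I i2 x"
      using zero_nearby[of x] square_le_line_energy[OF \<psi>(1)] unfolding I_def g_def by blast
    moreover have "0 \<le> h * I k x" for k
      using \<open>0 < h\<close> I_nonneg by simp
    ultimately show ?thesis by (smt (verit))
  qed
  have sq_int: "(\<lambda>x. (\<psi> x)\<^sup>2) integrable_on UNIV"
    by (rule integrable_compact_support[OF _ \<psi>(2)])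
       (auto intro!: continuous_intros Cinf_continuous_on[OF \<psi>(1)] simp: not_in_tsupp_imp_zero)
  have "((\<lambda>x. h * I i1 x + h * I i2 x) has_integral h * (2*h * G i1) + h * (2*h * G i2)) UNIV"
    by (intro has_integral_add has_integral_mult_right I_int)
  from has_integral_le[OF integrable_integral[OF sq_int] this pointwise]
  have "integral UNIV (\<lambda>x. (\<psi> x)\<^sup>2) \<le> 2*h\<^sup>2 * (G i1 + G i2)"
    by (simp add: power2_eq_square algebra_simps)
  also have "G i1 + G i2 \<le> (\<Sum>k\<in>UNIV. G k)"
    using sum_mono2[of UNIV "{i1, i2}" G] G_nonneg \<open>i1 \<noteq> i2\<close> by simp
  also have "(\<Sum>k\<in>UNIV. G k) = integral UNIV (grad_sq \<psi>)"
    unfolding G_def grad_sq_def g_def[symmetric] using g_int by (simp add: integral_sum)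
  finally show ?thesis using \<open>0 < h\<close> by (simp add: mult_left_mono)
qed


lemma abs_powr_le_split:
  fixes t K q :: real
  assumes "0 < K" "0 \<le> q" "q \<le> 2"
  shows "\<bar>t\<bar> powr q \<le> K powr q + K powr (q - 2) * t\<^sup>2"
proof (cases "\<bar>t\<bar> \<le> K")
  case True
  have "\<bar>t\<bar> powr q \<le> K powr q" by (rule powr_mono2[OF assms(2) _ True]) simp
  thus ?thesis by (simp add: add_increasing2)
next
  case False
  hence "0 < \<bar>t\<bar>" using assms(1) by simp
  have "\<bar>t\<bar> powr q = \<bar>t\<bar> powr (2 + (q - 2))" by simp
  hence "\<bar>t\<bar> powr q = t\<^sup>2 * \<bar>t\<bar> powr (q - 2)"
    using \<open>0 < \<bar>t\<bar>\<close> by (simp only: powr_add powr_numeral) simp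
  also have "\<dots> \<le> t\<^sup>2 * K powr (q - 2)"
    using assms False by (intro mult_left_mono powr_mono2') auto
  finally show ?thesis by (simp add: add_increasing mult.commute)
qed

lemma L2_lower_bound_of_Lq_normalised:
  fixes \<psi> :: "'a::euclidean_space \<Rightarrow> real"
  assumes q: "0 < q" "q \<le> 2" and S: "S \<in> lmeasurable" "0 < measure lebesgue S"
    and \<psi>: "(\<lambda>x. (\<psi> x)\<^sup>2) integrable_on UNIV" "\<And>x. x \<notin> S \<Longrightarrow> \<psi> x = 0"
    and normalised: "integral UNIV (\<lambda>x. \<bar>\<psi> x\<bar> powr q) = 1"
  shows "(2 * measure lebesgue S) powr (1 - 2/q) / 2 \<le> integral UNIV (\<lambda>x. (\<psi> x)\<^sup>2)"
proof -
  define \<mu> where "\<mu> = measure lebesgue S"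
  define K where "K = (2 * \<mu>) powr (-1/q)"
  have \<mu>: "0 < \<mu>" using S(2) by (simp add: \<mu>_def)
  have K: "0 < K" using \<mu> by (simp add: K_def)
  have "K powr q * \<mu> = (2 * \<mu>) powr (-1/q * q) * \<mu>"
    by (simp only: K_def powr_powr)
  also have "-1/q * q = -1"
    using q(1) by simp
  also have "(2 * \<mu>) powr (-1) * \<mu> = 1/2"
    using \<mu> by (simp add: powr_neg_one)
  finally have "K powr q * \<mu> = 1/2" .
  have S_int: "(indicator S :: 'a \<Rightarrow> real) integrable_on UNIV"
    using S(1) by (simp add: measurable_integrable[symmetric])
  have "1 = integral UNIV (\<lambda>x. \<bar>\<psi> x\<bar> powr q)" using normalised by simp
  also have "\<dots> \<le> integral UNIV (\<lambda>x. K powr q * indicator S x + K powr (q - 2) * (\<psi> x)\<^sup>2)"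
  proof (rule integral_le)
    show "(\<lambda>x. \<bar>\<psi> x\<bar> powr q) integrable_on UNIV"
      using normalised not_integrable_integral by fastforce
    show "(\<lambda>x. K powr q * indicator S x + K powr (q - 2) * (\<psi> x)\<^sup>2) integrable_on UNIV"
      by (intro integrable_add integrable_on_mult_right S_int \<psi>(1))
    show "\<bar>\<psi> x\<bar> powr q \<le> K powr q * indicator S x + K powr (q - 2) * (\<psi> x)\<^sup>2" for x
      using abs_powr_le_split[OF K, of q "\<psi> x"] q \<psi>(2)[of x] by (cases "x \<in> S") auto
  qed
  also have "\<dots> = K powr q * \<mu> + K powr (q - 2) * integral UNIV (\<lambda>x. (\<psi> x)\<^sup>2)"
    using S_int \<psi>(1) S(1)
    by (simp add: integral_add integrable_on_mult_right \<mu>_def lmeasure_integral_UNIV)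
  finally have "1/2 \<le> K powr (q - 2) * integral UNIV (\<lambda>x. (\<psi> x)\<^sup>2)"
    using \<open>K powr q * \<mu> = 1/2\<close> by simp
  hence "K powr (2 - q) / 2 \<le> K powr (2 - q) * K powr (q - 2) * integral UNIV (\<lambda>x. (\<psi> x)\<^sup>2)"
    using K by (simp add: mult.assoc)
  also have "K powr (2 - q) * K powr (q - 2) = 1"
    using K by (simp add: powr_add[symmetric])
  also have "K powr (2 - q) = (2 * \<mu>) powr (-1/q * (2 - q))"
    by (simp only: K_def powr_powr)
  also have "-1/q * (2 - q) = 1 - 2/q"
    using q(1) by (simp add: field_simps)
  finally show ?thesis by (simp add: \<mu>_def)
qed


lemma partial_derivative_bounded:
  fixes f :: "real^'n \<Rightarrow> real"
  assumes "Cinf f" "compact (tsupp f)"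
  obtains B where "\<And>x. \<bar>frechet_derivative f (at x) (axis i 1)\<bar> \<le> B"
proof -
  have "compact ((\<lambda>x. frechet_derivative f (at x) (axis i 1)) ` tsupp f)"
    by (intro compact_continuous_image Cinf_continuous_on Cinf_partial assms)
  then obtain B where "\<forall>y \<in> (\<lambda>x. frechet_derivative f (at x) (axis i 1)) ` tsupp f. norm y \<le> B"
    using compact_imp_bounded bounded_iff by metis
  hence "\<bar>frechet_derivative f (at x) (axis i 1)\<bar> \<le> max B 0" for x
    using partial_derivative_outside_tsupp[OF assms(1), of x] by (cases "x \<in> tsupp f") auto
  thus ?thesis by (rule that)
qed

lemma integral_partial_segment_le:
  fixes f :: "real^'n \<Rightarrow> real" and a b x :: "real^'n" and i :: 'n
  assumes f: "Cinf f" "\<And>y. \<bar>f y\<bar> \<le> 1"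
  defines "e \<equiv> axis i 1 :: real^'n"
  shows "integral {0..1} (\<lambda>s. if x + s *\<^sub>R e \<in> box a b then frechet_derivative f (at (x + s *\<^sub>R e)) e else 0)
          \<le> 2 * indicator (box (a - e) b) x"
proof -
  define T where "T = {s. x + s *\<^sub>R e \<in> box a b}"
  have box_iff: "x + s *\<^sub>R e \<in> box a b \<longleftrightarrow>
      a$i - x$i < s \<and> s < b$i - x$i \<and> (\<forall>j. j \<noteq> i \<longrightarrow> a$j < x$j \<and> x$j < b$j)" for s
    by (auto simp: mem_box_cart e_def axis_def)
  have "integral {0..1} (\<lambda>s. if s \<in> T then frechet_derivative f (at (x + s *\<^sub>R e)) e else 0)
      = integral (T \<inter> {0..1}) (\<lambda>s. frechet_derivative f (at (x + s *\<^sub>R e)) e)"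
    by (simp add: integral_restrict_Int)
  also have "\<dots> \<le> 2 * indicator (box (a - e) b) x"
  proof (cases "T \<inter> {0..1} = {}")
    case False
    then obtain s where "s \<in> T" "0 \<le> s" "s \<le> 1" by auto
    hence x: "x \<in> box (a - e) b" "\<forall>j. j \<noteq> i \<longrightarrow> a$j < x$j \<and> x$j < b$j"
      unfolding T_def box_iff by (auto simp: mem_box_cart e_def axis_def)
    define \<alpha> where "\<alpha> = max 0 (a$i - x$i)"
    define \<beta> where "\<beta> = min 1 (b$i - x$i)"
    have T_sub: "T \<inter> {0..1} \<subseteq> {\<alpha>..\<beta>}" and "{\<alpha>..\<beta>} - T \<inter> {0..1} \<subseteq> {\<alpha>, \<beta>}"
      using x(2) by (auto simp: T_def box_iff \<alpha>_def \<beta>_def)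
    have "integral (T \<inter> {0..1}) (\<lambda>s. frechet_derivative f (at (x + s *\<^sub>R e)) e)
        = integral {\<alpha>..\<beta>} (\<lambda>s. frechet_derivative f (at (x + s *\<^sub>R e)) e)"
    proof (rule integral_spike_set)
      show "negligible {s \<in> T \<inter> {0..1} - {\<alpha>..\<beta>}. frechet_derivative f (at (x + s *\<^sub>R e)) e \<noteq> 0}"
        by (rule negligible_subset[of "{}"]) (use T_sub in auto)
      show "negligible {s \<in> {\<alpha>..\<beta>} - T \<inter> {0..1}. frechet_derivative f (at (x + s *\<^sub>R e)) e \<noteq> 0}"
        by (rule negligible_subset[of "{\<alpha>, \<beta>}"]) (use \<open>{\<alpha>..\<beta>} - T \<inter> {0..1} \<subseteq> {\<alpha>, \<beta>}\<close> in auto)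
    qed
    also have "\<dots> \<le> 2"
    proof (cases "\<alpha> \<le> \<beta>")
      case True
      have "((\<lambda>s. frechet_derivative f (at (x + s *\<^sub>R e)) e) has_integral
              f (x + \<beta> *\<^sub>R e) - f (x + \<alpha> *\<^sub>R e)) {\<alpha>..\<beta>}"
        by (rule fundamental_theorem_of_calculus[OF True])
           (auto simp: has_real_derivative_iff_has_vector_derivative[symmetric]
             intro: DERIV_subset Cinf_has_derivative_line[OF f(1)])
      thus ?thesis
        using f(2)[of "x + \<beta> *\<^sub>R e"] f(2)[of "x + \<alpha> *\<^sub>R e"] by (simp add: integral_unique)
    qed simp
    finally show ?thesis using x(1) by simp
  qed simp
  finally show ?thesis by (simp add: T_def)
qed

lemma integral_partial_box_le:
  fixes f :: "real^'n \<Rightarrow> real" and a b :: "real^'n"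
  assumes f: "Cinf f" "compact (tsupp f)" "\<And>y. \<bar>f y\<bar> \<le> 1"
  shows "(\<lambda>x. frechet_derivative f (at x) (axis i 1)) integrable_on box a b"
    and "integral (box a b) (\<lambda>x. frechet_derivative f (at x) (axis i 1))
           \<le> 2 * measure lborel (box (a - axis i 1) b)"
proof -
  define e :: "real^'n" where "e = axis i 1"
  define g where "g x = frechet_derivative f (at x) e" for x
  have [measurable]: "g \<in> borel_measurable borel"
    unfolding g_def e_def by (intro borel_measurable_continuous_onI Cinf_continuous_on Cinf_partial f(1))
  obtain B where B: "\<And>x. \<bar>g x\<bar> \<le> B"
    using partial_derivative_bounded[OF f(1,2)] unfolding g_def e_def by blast
  have "0 \<le> B" using B[of 0] by linarith
  define F where "F x = indicator (box a b) x *\<^sub>R g x" for x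
  have F_int: "integrable lborel F"
    unfolding F_def
    by (rule integrableI_bounded_set_indicator[where B=B])
       (use emeasure_lborel_box_finite[of a b] B in \<open>auto intro!: AE_I2\<close>)
  have "(\<lambda>x. if x \<in> box a b then g x else 0) integrable_on UNIV"
    using integrable_on_lborel[OF F_int] by (rule integrable_eq) (simp add: F_def)
  thus "(\<lambda>x. frechet_derivative f (at x) (axis i 1)) integrable_on box a b"
    unfolding integrable_restrict_UNIV g_def e_def .
  have "integral (box a b) g = integral UNIV (\<lambda>x. if x \<in> box a b then g x else 0)"
    by (rule integral_restrict_UNIV[symmetric])
  also have "\<dots> = integral UNIV F"
    by (rule integral_cong) (simp add: F_def indicator_def)
  also have "\<dots> = (\<integral>x. F x \<partial>lborel)"
    by (rule integral_lborel[OF F_int])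
  also have "\<dots> = (\<integral>x. (\<integral>s. F (x + s *\<^sub>R e) * indicator {0..1} s \<partial>lborel) \<partial>lborel)"
    using integrable_segment_translates(2)[OF F_int, of 0 1 e] by simp
  also have "\<dots> \<le> (\<integral>x. 2 * indicator (box (a - e) b) x \<partial>lborel)"
  proof (rule integral_mono[OF integrable_segment_translates(1)[OF F_int zero_le_one]])
    show "integrable lborel (\<lambda>x. 2 * indicator (box (a - e) b) x :: real)"
      using emeasure_lborel_box_finite[of "a - e" b] by (intro integrable_mult_right integrable_real_indicator) auto
    fix x :: "real^'n"
    have "integrable lborel (\<lambda>s. indicator {0..1::real} s *\<^sub>R F (x + s *\<^sub>R e))"
      by (rule integrableI_bounded_set_indicator[where B=B])
         (use B \<open>0 \<le> B\<close> in \<open>auto simp: F_def indicator_def intro!: AE_I2\<close>)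
    hence "integrable lborel (\<lambda>s. F (x + s *\<^sub>R e) * indicator {0..1} s)"
      by (simp add: mult.commute)
    hence "(\<integral>s. F (x + s *\<^sub>R e) * indicator {0..1} s \<partial>lborel)
        = integral UNIV (\<lambda>s. F (x + s *\<^sub>R e) * indicator {0..1} s)"
      by (rule integral_lborel[symmetric])
    also have "\<dots> = integral UNIV
        (\<lambda>s. if s \<in> {0..1} then (if x + s *\<^sub>R e \<in> box a b then g (x + s *\<^sub>R e) else 0) else 0)"
      by (rule integral_cong) (simp add: F_def indicator_def)
    also have "\<dots> = integral {0..1} (\<lambda>s. if x + s *\<^sub>R e \<in> box a b then g (x + s *\<^sub>R e) else 0)"
      by (rule integral_restrict_UNIV)
    also have "\<dots> \<le> 2 * indicator (box (a - e) b) x"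
      unfolding g_def e_def by (rule integral_partial_segment_le[OF f(1,3)])
    finally show "(\<integral>s. F (x + s *\<^sub>R e) * indicator {0..1} s \<partial>lborel) \<le> 2 * indicator (box (a - e) b) x" .
  qed
  also have "\<dots> = 2 * measure lborel (box (a - e) b)"
    by simp
  finally show "integral (box a b) (\<lambda>x. frechet_derivative f (at x) (axis i 1))
           \<le> 2 * measure lborel (box (a - axis i 1) b)"
    by (simp add: g_def[abs_def] e_def)
qed


lemma perimeter_box_le:
  fixes a b :: "real^'n"
  shows "perimeter (box a b) \<le> ereal (2 * (\<Sum>j\<in>UNIV. measure lborel (box (a - axis j 1) b)))"
  unfolding perimeter_def
proof (rule SUP_least)
  fix \<phi> :: "real^'n \<Rightarrow> real^'n"
  assume "\<phi> \<in> {\<phi>. (\<forall>i. Cinf (\<lambda>x. \<phi> x $ i)) \<and> compact (tsupp \<phi>) \<and> (\<forall>x. norm (\<phi> x) \<le> 1)}"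
  hence \<phi>: "Cinf (\<lambda>x. \<phi> x $ j)" "compact (tsupp (\<lambda>x. \<phi> x $ j))" "\<bar>\<phi> y $ j\<bar> \<le> 1" for j y
    using component_le_norm_cart[of "\<phi> y" j]
    by (auto intro: compact_tsupp_subset[of \<phi>] order_trans)
  have "integral (box a b) (divergence \<phi>) =
        (\<Sum>j\<in>UNIV. integral (box a b) (\<lambda>x. frechet_derivative (\<lambda>y. \<phi> y $ j) (at x) (axis j 1)))"
    unfolding divergence_def by (intro integral_sum integral_partial_box_le(1) \<phi>) auto
  also have "\<dots> \<le> (\<Sum>j\<in>UNIV. 2 * measure lborel (box (a - axis j 1) b))"
    by (intro sum_mono integral_partial_box_le(2) \<phi>)
  finally show "ereal (integral (box a b) (divergence \<phi>))
      \<le> ereal (2 * (\<Sum>j\<in>UNIV. measure lborel (box (a - axis j 1) b)))"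
    by (simp add: sum_distrib_left)
qed

lemma perimeter_box_pos:
  fixes a b :: "real^'n"
  assumes "box a b \<noteq> {}"
  shows "0 < perimeter (box a b)"
proof -
  obtain p where p: "p \<in> box a b" using assms by blast
  have ab: "a$j < x$j \<and> x$j < b$j" if "x \<in> box a b" for x j
    using that by (simp add: mem_box_cart)
  obtain i :: 'n where True by blast
  define r where "r = 1 + (\<Sum>j\<in>UNIV. b$j - a$j)"
  have "0 < b$j - a$j" for j using ab[OF p, of j] by simp
  hence r: "b$j - a$j < r" for j
    unfolding r_def using member_le_sum[of j UNIV "\<lambda>j. b$j - a$j"] by (simp add: less_imp_le)
  have "0 < r" using r[of i] ab[OF p, of i] by linarith
  define G where "G = cube_bump b r"
  define \<phi> :: "real^'n \<Rightarrow> real^'n" where "\<phi> x = G x *\<^sub>R axis i 1" for x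
  have \<phi>_comp: "(\<lambda>x. \<phi> x $ j) = (\<lambda>x. axis i 1 $ j * G x)" for j
    by (simp add: \<phi>_def mult.commute)
  have G_diff: "G differentiable at x" for x
    unfolding G_def by (rule tensor_bumps_partial(1)[OF cube_bump_in_tensor_bumps])
  have "divergence \<phi> x = (\<Sum>j\<in>UNIV. if j = i then frechet_derivative G (at x) (axis i 1) else 0)" for x
    unfolding divergence_def \<phi>_comp partial_derivative_cmult[OF G_diff]
    by (intro sum.cong) (auto simp: axis_def)
  hence div: "divergence \<phi> = (\<lambda>x. frechet_derivative G (at x) (axis i 1))" by (simp add: fun_eq_iff)
  have div_pos: "0 < divergence \<phi> x" if "x \<in> box a b" for x
  proof -
    have j: "-1 < (x$j - b$j) / r \<and> (x$j - b$j) / r < 0" for j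
      using ab[OF that, of j] r[of j] \<open>0 < r\<close> by (simp add: divide_simps)
    have "\<bar>(x$j - b$j) / r\<bar> < 1" for j
      using j[of j] by (simp only: abs_less_iff) linarith
    hence "0 < bump_term [:1:] 0 ((x$j - b$j) / r)" for j
      by (simp add: bump_term_one del: abs_divide)
    thus ?thesis
      using \<open>0 < r\<close> j unfolding div G_def cube_bump_has_partial_derivative[OF \<open>0 < r\<close>]
      by (intro mult_pos_pos divide_pos_pos bump_term_one_deriv_pos prod_pos) auto
  qed
  have G_props: "Cinf G" "compact (tsupp G)" "\<And>y. \<bar>G y\<bar> \<le> 1"
    unfolding G_def
    using Cinf_cube_bump[of 1] compact_tsupp_cube_bump[OF \<open>0 < r\<close>]
    by (auto simp: abs_of_nonneg[OF cube_bump_nonneg] cube_bump_le_one)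
  have "\<forall>j. Cinf (\<lambda>x. \<phi> x $ j)"
    unfolding \<phi>_comp using G_props(1) by (blast intro: Cinf_cmult)
  moreover have "compact (tsupp \<phi>)"
    by (rule compact_tsupp_subset[OF G_props(2)]) (simp add: \<phi>_def)
  moreover have "\<forall>x. norm (\<phi> x) \<le> 1"
    using G_props(3) by (simp add: \<phi>_def)
  ultimately have \<phi>_admissible:
    "(\<forall>j. Cinf (\<lambda>x. \<phi> x $ j)) \<and> compact (tsupp \<phi>) \<and> (\<forall>x. norm (\<phi> x) \<le> 1)"
    by blast
  have "0 < integral (box a b) (divergence \<phi>)"
    unfolding div
  proof (rule integral_pos_continuous[OF _ integral_partial_box_le(1)[OF G_props] _ open_box p])
    show "continuous_on (box a b) (\<lambda>x. frechet_derivative G (at x) (axis i 1))"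
      by (intro Cinf_continuous_on Cinf_partial G_props)
  qed (use div_pos[unfolded div] p in \<open>auto intro: less_imp_le\<close>)
  also have "ereal (integral (box a b) (divergence \<phi>)) \<le> perimeter (box a b)"
    unfolding perimeter_def by (rule SUP_upper) (use \<phi>_admissible in simp)
  finally show ?thesis by (simp add: zero_ereal_def)
qed

lemma perimeter_Diff_negligible:
  fixes S N :: "(real^'n) set"
  assumes "negligible N"
  shows "perimeter (S - N) = perimeter S"
proof -
  have "integral (S - N) f = integral S f" for f :: "real^'n \<Rightarrow> real"
    by (rule integral_spike_set; rule negligible_subset[OF assms]) auto
  thus ?thesis by (simp add: perimeter_def)
qed


lemma exists_Lq_normalised_test_function:
  fixes U :: "(real^'n) set"
  assumes "open U" "p \<in> U" "0 < q"
  obtains \<psi> where "Cinf0 U \<psi>" "integral UNIV (\<lambda>x. \<bar>\<psi> x\<bar> powr q) = 1"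
proof -
  obtain r where r: "0 < r" "cball p r \<subseteq> U" using assms(1,2) open_contains_cball by blast
  define \<rho> where "\<rho> = r / real CARD('n)"
  have \<rho>: "0 < \<rho>" using r by (simp add: \<rho>_def)
  define G where "G = cube_bump p \<rho>"
  have "cbox (\<chi> i. p$i - \<rho>) (\<chi> i. p$i + \<rho>) \<subseteq> cball p r"
  proof
    fix x assume "x \<in> cbox (\<chi> i. p$i - \<rho>) (\<chi> i. p$i + \<rho>)"
    hence x_i: "p$i - \<rho> \<le> x$i \<and> x$i \<le> p$i + \<rho>" for i by (simp add: mem_box_cart)
    have "\<bar>(x - p)$i\<bar> \<le> \<rho>" for i using x_i[of i] by (auto simp: abs_le_iff)
    hence "norm (x - p) \<le> (\<Sum>i\<in>(UNIV::'n set). \<rho>)"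
      by (intro order_trans[OF norm_le_l1_cart] sum_mono)
    thus "x \<in> cball p r" by (simp add: \<rho>_def dist_norm norm_minus_commute)
  qed
  hence G_supp: "tsupp G \<subseteq> U" "compact (tsupp G)"
    using tsupp_cube_bump[OF \<rho>, of p] compact_tsupp_cube_bump[OF \<rho>, of p] r(2)
    unfolding G_def by blast+
  define I where "I = integral UNIV (\<lambda>x. \<bar>G x\<bar> powr q)"
  have G_cont: "continuous_on UNIV (\<lambda>x. \<bar>G x\<bar> powr q)"
    unfolding G_def using Cinf_cube_bump[of 1] \<open>0 < q\<close>
    by (intro continuous_on_powr' continuous_intros Cinf_continuous_on) auto
  have G_int: "(\<lambda>x. \<bar>G x\<bar> powr q) integrable_on UNIV"
    by (rule integrable_compact_support[OF G_cont G_supp(2)]) (simp add: not_in_tsupp_imp_zero)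
  have "0 < G p" unfolding G_def using \<rho> by (intro cube_bump_pos) auto
  hence I: "0 < I"
    unfolding I_def by (intro integral_pos_continuous[OF G_cont G_int _ open_UNIV UNIV_I[of p]]) auto
  define \<psi> where "\<psi> x = I powr (-1/q) * G x" for x
  have "Cinf0 U \<psi>"
  proof -
    have "Cinf \<psi>" unfolding \<psi>_def G_def by (rule Cinf_cube_bump)
    moreover have "tsupp \<psi> \<subseteq> tsupp G"
      unfolding tsupp_def \<psi>_def by (rule closure_mono) auto
    ultimately show ?thesis
      unfolding Cinf0_def using G_supp compact_tsupp_subset[OF G_supp(2), of \<psi>]
      by (auto simp: \<psi>_def)
  qed
  moreover have "integral UNIV (\<lambda>x. \<bar>\<psi> x\<bar> powr q) = I powr (-1/q * q) * I"
    unfolding \<psi>_def I_def using I by (simp add: abs_mult powr_mult powr_powr)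
  hence "integral UNIV (\<lambda>x. \<bar>\<psi> x\<bar> powr q) = 1"
    using I \<open>0 < q\<close> by (simp add: powr_neg_one)
  ultimately show ?thesis by (rule that)
qed

lemma lambda2q_ge:
  fixes U :: "(real^'n) set"
  assumes "open U" "U \<noteq> {}" "0 < q"
    and "\<And>\<psi>. Cinf0 U \<psi> \<Longrightarrow> integral UNIV (\<lambda>x. \<bar>\<psi> x\<bar> powr q) = 1 \<Longrightarrow> L \<le> integral UNIV (grad_sq \<psi>)"
  shows "L \<le> lambda2q q U"
  unfolding lambda2q_def
proof (rule cInf_greatest)
  obtain p where "p \<in> U" using assms(2) by blast
  then obtain \<psi> where "Cinf0 U \<psi>" "integral UNIV (\<lambda>x. \<bar>\<psi> x\<bar> powr q) = 1"
    using exists_Lq_normalised_test_function assms(1,3) by blast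
  thus "{integral UNIV (grad_sq \<psi>) |\<psi>. Cinf0 U \<psi> \<and> integral UNIV (\<lambda>x. \<bar>\<psi> x\<bar> powr q) = 1} \<noteq> {}"
    by blast
qed (use assms(4) in blast)


lemma measure_pos_open:
  fixes S :: "'a::euclidean_space set"
  assumes "S \<in> lmeasurable" "open S" "S \<noteq> {}"
  shows "0 < measure lebesgue S"
proof -
  obtain p where "p \<in> S" using assms(3) by blast
  have "0 < integral S (\<lambda>_. 1::real)"
    using assms(1) \<open>p \<in> S\<close> by (intro integral_pos_continuous assms(2))
       (auto simp: lmeasurable_iff_integrable_on)
  thus ?thesis by (simp add: lmeasure_integral[OF assms(1)])
qed

definition half_cube :: "'n \<Rightarrow> (real^'n) set" where
  "half_cube j = box (\<chi> i. if i = j then 0 else -1) (\<chi> i. 1)"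

text \<open>The slits are the pieces \<open>x\<^sub>i = k d (x\<^sub>j - d)\<close>, \<open>x\<^sub>j \<ge> 2d\<close>, of hyperplanes through the
  point \<open>d e\<^sub>j\<close>, so that the slit domain is star-shaped with respect to that point, while at
  height \<open>x\<^sub>j \<le> 1\<close> consecutive slits are at most \<open>2d\<close> apart in direction \<open>e\<^sub>i\<close>.\<close>

definition slits :: "'n \<Rightarrow> 'n \<Rightarrow> real \<Rightarrow> (real^'n) set" where
  "slits i j d = {x. 2*d \<le> x$j \<and> (\<exists>k::int. x$i = of_int k * d * (x$j - d))}"

definition slit_domain :: "'n \<Rightarrow> 'n \<Rightarrow> real \<Rightarrow> (real^'n) set" where
  "slit_domain i j d = half_cube j - slits i j d"

lemma mem_half_cube: "(x::real^'n) \<in> half_cube j \<longleftrightarrow> (\<forall>i. (if i = j then 0 else -1) < x$i \<and> x$i < 1)"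
  by (simp add: half_cube_def mem_box_cart)

lemma half_cube_props:
  fixes j :: "'n::finite"
  shows "half_cube j \<in> lmeasurable" "open (half_cube j)" "half_cube j \<noteq> {}"
proof -
  show "half_cube j \<in> lmeasurable" "open (half_cube j)" by (simp_all add: half_cube_def open_box)
  have "(\<chi> i. if i = j then 1/2 else 0) \<in> half_cube j" by (simp add: mem_half_cube)
  thus "half_cube j \<noteq> {}" by blast
qed

lemma closed_slits:
  fixes i j :: "'n::finite"
  assumes "0 < d"
  shows "closed (slits i j d)"
proof -
  define w where "w x = d * (max (x$j) (2*d) - d)" for x :: "real^'n"
  have w: "0 < w x" for x using assms by (simp add: w_def)
  have "slits i j d = {x. 2*d \<le> x$j} \<inter> (\<lambda>x. x$i / w x) -` \<int>"
  proof (intro set_eqI iffI)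
    fix x assume "x \<in> slits i j d"
    then obtain k :: int where k: "2*d \<le> x$j" "x$i = of_int k * d * (x$j - d)" by (auto simp: slits_def)
    moreover have "w x = d * (x$j - d)" using k(1) by (simp add: w_def max_def)
    ultimately have "x$i = of_int k * w x" by (simp add: mult.assoc)
    hence "x$i / w x = of_int k" using w[of x] by simp
    thus "x \<in> {x. 2*d \<le> x$j} \<inter> (\<lambda>x. x$i / w x) -` \<int>" using k(1) by (auto simp: Ints_def)
  next
    fix x assume "x \<in> {x. 2*d \<le> x$j} \<inter> (\<lambda>x. x$i / w x) -` \<int>"
    then obtain k :: int where k: "2*d \<le> x$j" "x$i / w x = of_int k" by (auto simp: Ints_def)
    hence "x$i = of_int k * w x" using w[of x] by (simp add: divide_eq_eq)
    moreover have "w x = d * (x$j - d)" using k(1) by (simp add: w_def max_def)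
    ultimately have "x$i = of_int k * d * (x$j - d)" by (simp add: mult.assoc)
    thus "x \<in> slits i j d" using k(1) by (auto simp: slits_def)
  qed
  moreover have "continuous_on UNIV (\<lambda>x. x$i / w x)"
    unfolding w_def using assms by (intro continuous_intros) (auto simp: max_def)
  hence "closed ((\<lambda>x. x$i / w x) -` \<int>)"
    using closed_vimage[OF closed_Ints] by blast
  moreover have "closed {x::real^'n. 2*d \<le> x$j}"
    by (intro closed_Collect_le continuous_intros)
  ultimately show ?thesis by (simp add: closed_Int)
qed

lemma negligible_slits:
  fixes i j :: "'n::finite"
  assumes "i \<noteq> j"
  shows "negligible (slits i j d)"
proof -
  define H where "H k = {x::real^'n. (axis i 1 - (of_int k * d) *\<^sub>R axis j 1) \<bullet> x = - (of_int k * d * d)}"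
    for k :: int
  have "slits i j d \<subseteq> \<Union> (range H)"
  proof
    fix x assume "x \<in> slits i j d"
    then obtain k :: int where "x$i = of_int k * d * (x$j - d)" by (auto simp: slits_def)
    hence "x \<in> H k" by (simp add: H_def inner_diff_left inner_axis' algebra_simps)
    thus "x \<in> \<Union> (range H)" by blast
  qed
  moreover have "negligible (\<Union> (range H))"
  proof (rule negligible_countable_Union)
    fix S assume "S \<in> range H"
    then obtain k where "S = H k" by blast
    have "(axis i 1 - (of_int k * d) *\<^sub>R axis j 1 :: real^'n) $ i = 1"
      using assms by (simp add: axis_def)
    hence "axis i 1 - (of_int k * d) *\<^sub>R axis j 1 \<noteq> (0::real^'n)" by (metis zero_index zero_neq_one)
    thus "negligible S" unfolding \<open>S = H k\<close> H_def by (intro negligible_hyperplane disjI1)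
  qed simp
  ultimately show ?thesis by (rule negligible_subset[rotated])
qed


lemma slit_domain_props:
  fixes i j :: "'n::finite"
  assumes "0 < d" "i \<noteq> j"
  shows "open (slit_domain i j d)"
    and "slit_domain i j d \<in> lmeasurable"
    and "measure lebesgue (slit_domain i j d) = measure lebesgue (half_cube j)"
    and "perimeter (slit_domain i j d) = perimeter (half_cube j)"
proof -
  show "open (slit_domain i j d)"
    unfolding slit_domain_def using half_cube_props(2) closed_slits[OF assms(1)] by (rule open_Diff)
  have null: "slits i j d \<in> null_sets lebesgue"
    using negligible_slits[OF assms(2)] negligible_iff_null_sets by blast
  show "slit_domain i j d \<in> lmeasurable"
    unfolding slit_domain_def using half_cube_props(1)
    by (rule fmeasurable.Diff) (use null in \<open>auto simp: fmeasurable_def null_setsD1\<close>)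
  show "measure lebesgue (slit_domain i j d) = measure lebesgue (half_cube j)"
    unfolding slit_domain_def using half_cube_props(1)[of j]
    by (intro measure_Diff_null_set null) (simp add: fmeasurable_def)
  show "perimeter (slit_domain i j d) = perimeter (half_cube j)"
    unfolding slit_domain_def by (rule perimeter_Diff_negligible[OF negligible_slits[OF assms(2)]])
qed

lemma starlike_slit_domain:
  fixes i j :: "'n::finite"
  assumes d: "0 < d" "d < 1/2" and "i \<noteq> j"
  shows "starlike (slit_domain i j d)"
  unfolding starlike_def
proof
  define c :: "real^'n" where "c = (\<chi> k. if k = j then d else 0)"
  show "c \<in> slit_domain i j d"
    using d by (auto simp: slit_domain_def mem_half_cube slits_def c_def)
  show "\<forall>y\<in>slit_domain i j d. closed_segment c y \<subseteq> slit_domain i j d"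
  proof (intro ballI subsetI)
    fix y z assume y: "y \<in> slit_domain i j d" and z: "z \<in> closed_segment c y"
    have "c \<in> half_cube j" "y \<in> half_cube j"
      using y d by (auto simp: slit_domain_def mem_half_cube c_def)
    hence "closed_segment c y \<subseteq> half_cube j"
      by (intro closed_segment_subset) (simp_all add: half_cube_def convex_box)
    hence z_half: "z \<in> half_cube j" using z by auto
    obtain t where t: "0 \<le> t" "t \<le> 1" "z = (1 - t) *\<^sub>R c + t *\<^sub>R y"
      using z by (auto simp: in_segment)
    have zj: "z$j - d = t * (y$j - d)" and zi: "z$i = t * y$i"
      unfolding t(3) using \<open>i \<noteq> j\<close> by (simp_all add: c_def algebra_simps)
    show "z \<in> slit_domain i j d"
    proof (rule ccontr)
      assume "z \<notin> slit_domain i j d"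
      with z_half obtain k :: int where k: "2*d \<le> z$j" "z$i = of_int k * d * (z$j - d)"
        by (auto simp: slit_domain_def slits_def)
      have "d \<le> t * (y$j - d)" using k(1) zj by simp
      hence "0 < t * (y$j - d)" using d(1) by linarith
      hence "0 < t" "0 < y$j - d" using t(1) by (auto simp: zero_less_mult_iff)
      moreover have "t * (y$j - d) \<le> y$j - d"
        using \<open>0 < y$j - d\<close> t(2) by (simp add: mult_left_le_one_le)
      hence "2*d \<le> y$j" using \<open>d \<le> t * (y$j - d)\<close> by linarith
      moreover have "t * y$i = t * (of_int k * d * (y$j - d))"
        using k(2) zi zj by (simp add: algebra_simps)
      ultimately have "y \<in> slits i j d" using \<open>0 < t\<close> by (auto simp: slits_def)
      with y show False by (simp add: slit_domain_def)
    qed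
  qed
qed

lemma slit_domain_near_complement:
  fixes i j :: "'n::finite"
  assumes "0 < d" "i \<noteq> j"
  shows "(\<exists>s. \<bar>s\<bar> \<le> 2*d \<and> x + s *\<^sub>R axis j 1 \<notin> slit_domain i j d) \<or>
         (\<exists>s. \<bar>s\<bar> \<le> 2*d \<and> x + s *\<^sub>R axis i 1 \<notin> slit_domain i j d)"
proof (cases "x \<in> half_cube j \<and> 2*d \<le> x$j")
  case False
  show ?thesis
  proof (cases "x \<in> half_cube j")
    case True
    hence "0 < x$j" "x$j < 2*d" using False by (auto simp: mem_half_cube dest: spec[of _ j])
    moreover have "x + (- x$j) *\<^sub>R axis j 1 \<notin> half_cube j"
      unfolding mem_half_cube by (auto intro!: exI[of _ j])
    ultimately show ?thesis
      by (intro disjI1 exI[of _ "- x$j"]) (auto simp: slit_domain_def)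
  qed (use assms in \<open>auto simp: slit_domain_def intro!: exI[of _ 0]\<close>)
next
  case True
  define w where "w = d * (x$j - d)"
  have "0 < w" "w \<le> 2*d"
    using True assms(1) by (auto simp: w_def mem_half_cube mult_left_le dest: spec[of _ j])
  define k where "k = \<lfloor>x$i / w\<rfloor>"
  have "of_int k \<le> x$i / w" "x$i / w < of_int k + 1"
    unfolding k_def by (rule of_int_floor_le, rule real_of_int_floor_add_one_gt)
  hence "of_int k * w \<le> x$i" "x$i < (of_int k + 1) * w"
    using \<open>0 < w\<close> by (simp_all add: le_divide_eq divide_less_eq)
  hence "\<bar>of_int k * w - x$i\<bar> \<le> 2*d"
    using \<open>w \<le> 2*d\<close> by (simp add: algebra_simps abs_if)
  moreover have "x + (of_int k * w - x$i) *\<^sub>R axis i 1 \<in> slits i j d"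
    using True assms(2) by (auto simp: slits_def w_def axis_def intro!: exI[of _ k])
  ultimately show ?thesis
    by (intro disjI2 exI[of _ "of_int k * w - x$i"]) (auto simp: slit_domain_def)
qed


lemma lambda2q_slit_domain_ge:
  fixes i j :: "'n::finite"
  assumes d: "0 < d" "d < 1/2" and "i \<noteq> j" and q: "0 < q" "q \<le> 2"
  shows "(2 * measure lebesgue (half_cube j)) powr (1 - 2/q) / (16 * d\<^sup>2) \<le> lambda2q q (slit_domain i j d)"
proof (rule lambda2q_ge[OF slit_domain_props(1)[OF d(1) \<open>i \<noteq> j\<close>] _ q(1)])
  show "slit_domain i j d \<noteq> {}"
    using starlike_slit_domain[OF d \<open>i \<noteq> j\<close>] by (auto simp: starlike_def)
  fix \<psi> assume \<psi>: "Cinf0 (slit_domain i j d) \<psi>" and normalised: "integral UNIV (\<lambda>x. \<bar>\<psi> x\<bar> powr q) = 1"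
  have vanish: "\<psi> x = 0" if "x \<notin> slit_domain i j d" for x
    using \<psi> that not_in_tsupp_imp_zero by (auto simp: Cinf0_def)
  have "(\<exists>s. \<bar>s\<bar> \<le> 2*d \<and> \<psi> (x + s *\<^sub>R axis i 1) = 0) \<or>
        (\<exists>s. \<bar>s\<bar> \<le> 2*d \<and> \<psi> (x + s *\<^sub>R axis j 1) = 0)" for x
    using slit_domain_near_complement[OF d(1) \<open>i \<noteq> j\<close>, of x] vanish by blast
  with \<psi> d(1) have "integral UNIV (\<lambda>x. (\<psi> x)\<^sup>2) \<le> 2 * (2*d)\<^sup>2 * integral UNIV (grad_sq \<psi>)"
    by (intro poincare_two_directions[OF _ _ \<open>i \<noteq> j\<close>]) (auto simp: Cinf0_def)
  moreover have "(2 * measure lebesgue (half_cube j)) powr (1 - 2/q) / 2 \<le> integral UNIV (\<lambda>x. (\<psi> x)\<^sup>2)"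
  proof (rule L2_lower_bound_of_Lq_normalised[OF q half_cube_props(1) _ _ _ normalised])
    show "0 < measure lebesgue (half_cube j)"
      using half_cube_props by (rule measure_pos_open)
    show "(\<lambda>x. (\<psi> x)\<^sup>2) integrable_on UNIV"
      using \<psi> unfolding Cinf0_def
      by (intro integrable_compact_support[of _ "tsupp \<psi>"] continuous_intros Cinf_continuous_on)
         (auto simp: not_in_tsupp_imp_zero)
    show "\<psi> x = 0" if "x \<notin> half_cube j" for x
      using that vanish by (auto simp: slit_domain_def)
  qed
  ultimately show "(2 * measure lebesgue (half_cube j)) powr (1 - 2/q) / (16 * d\<^sup>2) \<le> integral UNIV (grad_sq \<psi>)"
    using d(1) by (simp add: divide_simps power2_eq_square mult_ac)
qed

theorem propositionA2:
  fixes q :: real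
  assumes "CARD('n::finite) \<ge> 2" and "1 \<le> q" and "q < 2"
  shows "\<forall>M::real. \<exists>\<Omega> :: (real^'n) set. open \<Omega> \<and> simply_connected \<Omega> \<and>
           \<Omega> \<in> sets lebesgue \<and> 0 < emeasure lebesgue \<Omega> \<and> emeasure lebesgue \<Omega> < \<infinity> \<and>
           perimeter \<Omega> < \<infinity> \<and> F2q q \<Omega> > M"
proof
  fix M :: real
  obtain T :: "'n set" where "card T = 2" using obtain_subset_with_card_n[OF assms(1)] by blast
  then obtain i j :: 'n where "i \<noteq> j" by (auto simp: card_2_iff)
  define \<mu> where "\<mu> = measure lebesgue (half_cube j)"
  have \<mu>: "0 < \<mu>" unfolding \<mu>_def using half_cube_props by (rule measure_pos_open)
  have "0 < perimeter (half_cube j)"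
    using half_cube_props(3)[of j] unfolding half_cube_def by (rule perimeter_box_pos)
  moreover have "perimeter (half_cube j) < \<infinity>"
    unfolding half_cube_def by (rule le_less_trans[OF perimeter_box_le]) simp
  ultimately obtain P where P: "0 < P" "perimeter (half_cube j) = ereal P"
    by (cases "perimeter (half_cube j)") auto
  define c where "c = (2 * \<mu>) powr (1 - 2/q) / 16 * (\<mu> powr (1/2 + 1/q) / P)\<^sup>2"
  have c: "0 < c" using \<mu> P by (simp add: c_def)
  define d where "d = min (1/4) (sqrt (c / (\<bar>M\<bar> + 1)))"
  have d: "0 < d" "d < 1/2" "d\<^sup>2 \<le> c / (\<bar>M\<bar> + 1)"
    using c by (auto simp: d_def min_le_iff_disj power_mono real_sqrt_pow2 intro: order.trans[OF power_mono])
  define \<Omega> where "\<Omega> = slit_domain i j d"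
  note \<Omega> = slit_domain_props[OF d(1) \<open>i \<noteq> j\<close>, folded \<Omega>_def]
  have "(\<bar>M\<bar> + 1) * d\<^sup>2 \<le> c"
    using d(3) pos_le_divide_eq[of "\<bar>M\<bar> + 1" "d\<^sup>2" c] by (simp add: mult.commute)
  moreover have "M * d\<^sup>2 \<le> \<bar>M\<bar> * d\<^sup>2" "0 < d\<^sup>2" using d(1) by (simp_all add: mult_right_mono)
  ultimately have "M * d\<^sup>2 < c" by (simp only: distrib_right mult_1)
  hence "M < c / d\<^sup>2" using d(1) by (simp add: less_divide_eq)
  also have "c / d\<^sup>2 = (2 * \<mu>) powr (1 - 2/q) / (16 * d\<^sup>2) * (\<mu> powr (1/2 + 1/q) / P)\<^sup>2"
    by (simp add: c_def)
  also have "\<dots> \<le> lambda2q q \<Omega> * (\<mu> powr (1/2 + 1/q) / P)\<^sup>2"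
    using lambda2q_slit_domain_ge[OF d(1,2) \<open>i \<noteq> j\<close>, of q] assms(2,3)
    by (intro mult_right_mono) (simp_all add: \<Omega>_def \<mu>_def)
  also have "\<dots> = F2q q \<Omega>"
    by (simp add: F2q_def \<Omega> P(2) \<mu>_def)
  finally have "M < F2q q \<Omega>" .
  moreover have "emeasure lebesgue \<Omega> = ennreal \<mu>"
    using emeasure_eq_measure2[OF \<Omega>(2)] \<Omega>(3) by (simp add: \<mu>_def)
  moreover have "simply_connected \<Omega>"
    unfolding \<Omega>_def by (intro starlike_imp_simply_connected starlike_slit_domain d(1,2) \<open>i \<noteq> j\<close>)
  ultimately show "\<exists>\<Omega> :: (real^'n) set. open \<Omega> \<and> simply_connected \<Omega> \<and>
           \<Omega> \<in> sets lebesgue \<and> 0 < emeasure lebesgue \<Omega> \<and> emeasure lebesgue \<Omega> < \<infinity> \<and>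
           perimeter \<Omega> < \<infinity> \<and> F2q q \<Omega> > M"
    using \<Omega>(1,2,4) P(2) \<mu> by (intro exI[of _ \<Omega>]) (simp add: fmeasurable_def)
qed

end
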